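(* Let $n\in\mathbb{N}$ and $m\geq 3$. Then \[ p'_{e,m}(n) -p'_{o,m}(n) = \begin{cases} (-1)^k, &\text{if } n=P_{m+2,k}\text{ or }n=Q_{m+2,k}\text{ for some }k\in\mathbb{N}, \\ 0, & \text{otherwise,} \end{cases} \] where $P_{m+2,k}=\frac{k(mk-(m-2))}{2}$ and $Q_{m+2,k}=\frac{k(mk+(m-2))}{2}$.
   Context: For $m\ge3$, $p'_{e,m}(n)$ (resp. $p'_{o,m}(n)$) is the number of partitions of $n$ into an even (resp. odd) number of distinct parts, each part being congruent to $0$, $1$ or $m-1$ modulo $m$. *)

theory Defs
  imports Main
begin

definition dist_parts_mod :: "nat \<Rightarrow> nat \<Rightarrow> nat set set" where
  "dist_parts_mod m n = {S. finite S \<and> 0 \<notin> S \<and> \<Sum>S = n \<and>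
      (\<forall>x\<in>S. x mod m = 0 \<or> x mod m = 1 \<or> x mod m = m - 1)}"

definition p_e :: "nat \<Rightarrow> nat \<Rightarrow> nat" where
  "p_e m n = card {S \<in> dist_parts_mod m n. even (card S)}"

definition p_o :: "nat \<Rightarrow> nat \<Rightarrow> nat" where
  "p_o m n = card {S \<in> dist_parts_mod m n. odd (card S)}"

definition P_gen :: "nat \<Rightarrow> nat \<Rightarrow> int" where
  "P_gen m k = (int k * (int m * int k - (int m - 2))) div 2"

definition Q_gen :: "nat \<Rightarrow> nat \<Rightarrow> int" where
  "Q_gen m k = (int k * (int m * int k + (int m - 2))) div 2"

end

(* A partition counted by p'_{e,m} or p'_{o,m} splits into the parts m a, a in A, and the parts
   |m t + 1|, t in D, where t >= 0 gives the parts congruent to 1 and t < 0 those congruent to -1.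
   Reading the finite set D of integers as a Maya diagram, the part |m t + 1| contributes m |t| + 1
   or m |t| - 1 according to the sign of t, so the partition has size m (sum A + energy D) + charge D,
   and its number of parts has the parity of card A + charge D.  Viewing a Maya diagram of charge c
   as an ordinary partition lambda, the involution that moves the larger of max A and
   lambda_1 to the other side preserves sum A + energy D and the charge and changes card A by one.
   Its fixed points are the pairs ({}, ground state of charge c), whose size is P_{m+2,c} for c >= 0
   and Q_{m+2,-c} for c < 0; for m >= 3 at most one c has size n. *)

theory Submission
  imports Defs "HOL-Library.Disjoint_Sets"
begin

section \<open>Maya diagrams\<close>

text \<open>A finite set \<open>D\<close> of integers stands for the Maya diagram that differs from the vacuum,
  in which exactly the negative positions are occupied, at the positions in \<open>D\<close>.\<close>

definition occupied :: "int set \<Rightarrow> int \<Rightarrow> bool" where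
  "occupied D x \<longleftrightarrow> (x \<in> D) \<noteq> (x < 0)"

definition toggle :: "int \<Rightarrow> int set \<Rightarrow> int set" where
  "toggle x D = (if x \<in> D then D - {x} else insert x D)"

definition shift_down :: "int set \<Rightarrow> int set" where
  "shift_down D = toggle (-1) ((\<lambda>t. t - 1) ` D)"

definition shift_up :: "int set \<Rightarrow> int set" where
  "shift_up D = toggle 0 ((\<lambda>t. t + 1) ` D)"

definition charge :: "int set \<Rightarrow> int" where
  "charge D = (\<Sum>t\<in>D. if 0 \<le> t then 1 else -1)"

definition energy :: "int set \<Rightarrow> int" where
  "energy D = (\<Sum>t\<in>D. \<bar>t\<bar>)"

definition top_occupied :: "int set \<Rightarrow> int" where
  "top_occupied D = Sup {x. occupied D x}"

text \<open>If the diagram has charge \<open>c\<close> and corresponds to the partition \<open>\<lambda>\<close>, its top occupied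
  position is \<open>\<lambda>\<^sub>1 + c - 1\<close>, so \<open>first_part\<close> is the largest part \<open>\<lambda>\<^sub>1\<close>.\<close>

definition first_part :: "int set \<Rightarrow> int" where
  "first_part D = top_occupied D - charge D + 1"

lemma occupied_ext: "(\<And>x. occupied D x \<longleftrightarrow> occupied E x) \<Longrightarrow> D = E"
  unfolding occupied_def by blast

lemma occupied_toggle: "occupied (toggle x D) y \<longleftrightarrow> (if y = x then \<not> occupied D x else occupied D y)"
  by (auto simp: occupied_def toggle_def)

lemma finite_toggle [simp]: "finite (toggle x D) \<longleftrightarrow> finite D"
  by (simp add: toggle_def)

lemma toggle_toggle [simp]: "toggle x (toggle x D) = D"
  by (auto simp: toggle_def)

lemma finite_shift_down [simp]: "finite D \<Longrightarrow> finite (shift_down D)"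
  by (simp add: shift_down_def)

lemma finite_shift_up [simp]: "finite D \<Longrightarrow> finite (shift_up D)"
  by (simp add: shift_up_def)

lemma occupied_shift_down: "occupied (shift_down D) y \<longleftrightarrow> occupied D (y + 1)"
proof -
  have "y \<in> (\<lambda>t. t - 1) ` D \<longleftrightarrow> y + 1 \<in> D" by force
  then show ?thesis unfolding shift_down_def occupied_toggle by (auto simp: occupied_def)
qed

lemma occupied_shift_up: "occupied (shift_up D) y \<longleftrightarrow> occupied D (y - 1)"
proof -
  have "y \<in> (\<lambda>t. t + 1) ` D \<longleftrightarrow> y - 1 \<in> D" by force
  then show ?thesis unfolding shift_up_def occupied_toggle by (auto simp: occupied_def)
qed

lemma shift_up_shift_down [simp]: "shift_up (shift_down D) = D"
  by (rule occupied_ext) (simp add: occupied_shift_up occupied_shift_down)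

lemma shift_down_shift_up [simp]: "shift_down (shift_up D) = D"
  by (rule occupied_ext) (simp add: occupied_shift_up occupied_shift_down)

lemma charge_toggle:
  "finite D \<Longrightarrow> charge (toggle x D) = charge D + (if occupied D x then -1 else 1)"
  by (auto simp: charge_def toggle_def occupied_def sum_diff1)

lemma energy_toggle:
  "finite D \<Longrightarrow> energy (toggle x D) = energy D + (if occupied D x then - x else x)"
  by (auto simp: energy_def toggle_def occupied_def sum_diff1)

lemma charge_shift_down: "finite D \<Longrightarrow> charge (shift_down D) = charge D - 1"
proof -
  assume D: "finite D"
  have "charge ((\<lambda>t. t - 1) ` D) = (\<Sum>t\<in>D. (if 0 \<le> t then 1 else -1) - (if t = 0 then 2 else 0))"
    unfolding charge_def by (subst sum.reindex) (auto intro!: sum.cong simp: inj_on_def)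
  also have "\<dots> = charge D - (if 0 \<in> D then 2 else 0)"
    using D by (simp add: charge_def sum_subtractf)
  finally show ?thesis
    using D by (auto simp: shift_down_def charge_toggle occupied_def image_iff)
qed

lemma energy_shift_down: "finite D \<Longrightarrow> energy (shift_down D) = energy D - charge D + 1"
proof -
  assume D: "finite D"
  have "energy ((\<lambda>t. t - 1) ` D) = (\<Sum>t\<in>D. \<bar>t\<bar> - (if 0 \<le> t then 1 else -1) + (if t = 0 then 2 else 0))"
    unfolding energy_def by (subst sum.reindex) (auto intro!: sum.cong simp: inj_on_def)
  also have "\<dots> = energy D - charge D + (if 0 \<in> D then 2 else 0)"
    using D by (simp add: energy_def charge_def sum.distrib sum_subtractf)
  finally show ?thesis
    using D by (auto simp: shift_down_def energy_toggle occupied_def image_iff)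
qed

lemma charge_shift_up: "finite D \<Longrightarrow> charge (shift_up D) = charge D + 1"
  using charge_shift_down[of "shift_up D"] by simp

lemma energy_shift_up: "finite D \<Longrightarrow> energy (shift_up D) = energy D + charge D"
  using energy_shift_down[of "shift_up D"] charge_shift_up[of D] by simp

lemma even_card_iff_even_charge: "finite D \<Longrightarrow> even (card D) \<longleftrightarrow> even (charge D)"
  by (induction D rule: finite_induct) (auto simp: charge_def)

lemma occupied_bounded:
  assumes "finite D"
  shows "{x. occupied D x} \<noteq> {}" and "bdd_above {x. occupied D x}"
proof -
  have "infinite ({..<0::int} - D)"
    using assms by (intro Diff_infinite_finite) (auto simp: infinite_Iio)
  then obtain x where "x \<in> {..<0::int} - D" using infinite_imp_nonempty by blast
  then show "{x. occupied D x} \<noteq> {}" by (auto simp: occupied_def)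
  have "{x. occupied D x} \<subseteq> insert (-1) D \<union> {..-1}" by (auto simp: occupied_def)
  moreover have "bdd_above (insert (-1) D \<union> {..-1})" using assms by simp
  ultimately show "bdd_above {x. occupied D x}" by (rule bdd_above_mono[rotated])
qed

lemma occupied_top_occupied: "finite D \<Longrightarrow> occupied D (top_occupied D)"
proof -
  assume "finite D"
  note bounded = occupied_bounded[OF this]
  have "top_occupied D - 1 < top_occupied D" by simp
  then obtain x where "occupied D x" "top_occupied D - 1 < x"
    unfolding top_occupied_def using less_cSup_iff[OF bounded] by auto
  moreover have "x \<le> top_occupied D"
    unfolding top_occupied_def using bounded(2) \<open>occupied D x\<close> by (simp add: cSup_upper)
  ultimately have "x = top_occupied D" by linarith
  with \<open>occupied D x\<close> show ?thesis by simp
qed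

lemma le_top_occupied: "finite D \<Longrightarrow> occupied D y \<Longrightarrow> y \<le> top_occupied D"
  unfolding top_occupied_def using occupied_bounded(2) by (simp add: cSup_upper)

lemma top_occupied_eqI: "occupied D x \<Longrightarrow> (\<And>y. occupied D y \<Longrightarrow> y \<le> x) \<Longrightarrow> top_occupied D = x"
  unfolding top_occupied_def by (intro cSup_eq_maximum) auto

lemma charge_eq_card:
  "finite D \<Longrightarrow> charge D = int (card {t\<in>D. 0 \<le> t}) - int (card {t\<in>D. t < 0})"
  unfolding charge_def by (subst sum.If_cases) (auto simp: Int_def not_le)

lemma occupied_mono_charge_eq:
  assumes D: "finite D" and E: "finite E" and mono: "\<And>x. occupied D x \<Longrightarrow> occupied E x"
    and charge: "charge D = charge E"
  shows "D = E"
proof -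
  define DP DN EP EN where "DP = {t\<in>D. 0 \<le> t}" and "DN = {t\<in>D. t < 0}"
    and "EP = {t\<in>E. 0 \<le> t}" and "EN = {t\<in>E. t < 0}"
  have fin: "finite DP" "finite DN" "finite EP" "finite EN"
    using D E by (simp_all add: DP_def DN_def EP_def EN_def)
  have pos: "DP \<subseteq> EP"
    using mono by (force simp: occupied_def DP_def EP_def)
  have neg: "EN \<subseteq> DN"
    using mono by (force simp: occupied_def DN_def EN_def)
  have "card DP \<le> card EP" "card EN \<le> card DN"
    using fin pos neg by (simp_all add: card_mono)
  moreover have "int (card DP) - int (card DN) = int (card EP) - int (card EN)"
    using charge charge_eq_card[OF D] charge_eq_card[OF E] by (simp add: DP_def DN_def EP_def EN_def)
  ultimately have "card DP = card EP" "card EN = card DN" by linarith+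
  then have "DP = EP" "EN = DN"
    using fin pos neg by (simp_all add: card_subset_eq)
  moreover have "D = DP \<union> DN" "E = EP \<union> EN"
    by (auto simp: DP_def DN_def EP_def EN_def)
  ultimately show ?thesis by simp
qed

definition ground_state :: "int \<Rightarrow> int set" where
  "ground_state c = (if 0 \<le> c then {0..c - 1} else {c..-1})"

lemma finite_ground_state [simp]: "finite (ground_state c)"
  by (simp add: ground_state_def)

lemma occupied_ground_state: "occupied (ground_state c) y \<longleftrightarrow> y < c"
  by (auto simp: ground_state_def occupied_def)

lemma top_occupied_ground_state: "top_occupied (ground_state c) = c - 1"
  by (rule top_occupied_eqI) (auto simp: occupied_ground_state)

lemma charge_ground_state [simp]: "charge (ground_state c) = c"
proof (cases "0 \<le> c")
  case True
  then have "charge (ground_state c) = (\<Sum>t\<in>{0..c - 1}. 1)"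
    unfolding charge_def ground_state_def by (intro sum.cong) auto
  then show ?thesis using True by simp
next
  case False
  then have "charge (ground_state c) = (\<Sum>t\<in>{c..-1}. -1)"
    unfolding charge_def ground_state_def by (intro sum.cong) auto
  then show ?thesis using False by simp
qed

lemma first_part_ground_state [simp]: "first_part (ground_state c) = 0"
  by (simp add: first_part_def top_occupied_ground_state)

lemma card_ground_state [simp]: "card (ground_state c) = nat \<bar>c\<bar>"
  by (simp add: ground_state_def)

lemma energy_ground_state: "2 * energy (ground_state c) = c * (c - 1)"
proof (induction c rule: int_induct[where k = 0])
  case base
  then show ?case by (simp add: energy_def ground_state_def)
next
  case (step1 c)
  then have "ground_state (c + 1) = insert c (ground_state c)" "c \<notin> ground_state c" by (auto simp: ground_state_def)
  then show ?case using step1 by (simp add: energy_def algebra_simps)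
next
  case (step2 c)
  then have "ground_state (c - 1) = insert (c - 1) (ground_state c)" "c - 1 \<notin> ground_state c"
    by (auto simp: ground_state_def)
  then show ?case using step2 by (simp add: energy_def algebra_simps)
qed

lemma ground_state_if_first_part_nonpos:
  assumes D: "finite D" and first: "first_part D \<le> 0"
  shows "D = ground_state (charge D)"
proof (rule occupied_mono_charge_eq[OF D finite_ground_state])
  fix x assume "occupied D x"
  then have "x \<le> top_occupied D" by (rule le_top_occupied[OF D])
  with first show "occupied (ground_state (charge D)) x" by (simp add: first_part_def occupied_ground_state)
qed simp

text \<open>In the partition picture, \<open>add_part a\<close> inserts a new largest part \<open>a \<ge> \<lambda>\<^sub>1\<close> and
  \<open>remove_first_part\<close> deletes \<open>\<lambda>\<^sub>1\<close>; both keep the charge.\<close>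

definition add_part :: "int \<Rightarrow> int set \<Rightarrow> int set" where
  "add_part a D = toggle (a + charge D - 1) (shift_down D)"

definition remove_first_part :: "int set \<Rightarrow> int set" where
  "remove_first_part D = shift_up (toggle (top_occupied D) D)"

lemma finite_add_part [simp]: "finite D \<Longrightarrow> finite (add_part a D)"
  by (simp add: add_part_def)

lemma finite_remove_first_part [simp]: "finite D \<Longrightarrow> finite (remove_first_part D)"
  by (simp add: remove_first_part_def)

context
  fixes a :: int and D :: "int set"
  assumes finite: "finite D" and first_part_le: "first_part D \<le> a"
begin

private lemma not_occupied_new_top: "\<not> occupied (shift_down D) (a + charge D - 1)"
proof
  assume "occupied (shift_down D) (a + charge D - 1)"
  then have "a + charge D \<le> top_occupied D"
    using le_top_occupied[OF finite] by (simp add: occupied_shift_down)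
  with first_part_le show False by (simp add: first_part_def)
qed

lemma charge_add_part: "charge (add_part a D) = charge D"
  using finite not_occupied_new_top by (simp add: add_part_def charge_toggle charge_shift_down)

lemma energy_add_part: "energy (add_part a D) = energy D + a"
  using finite not_occupied_new_top by (simp add: add_part_def energy_toggle energy_shift_down)

lemma top_occupied_add_part: "top_occupied (add_part a D) = a + charge D - 1"
proof (rule top_occupied_eqI)
  show "occupied (add_part a D) (a + charge D - 1)"
    using not_occupied_new_top by (simp add: add_part_def occupied_toggle)
next
  fix y assume "occupied (add_part a D) y"
  then have "y = a + charge D - 1 \<or> y + 1 \<le> top_occupied D"
    using le_top_occupied[OF finite]
    by (auto simp: add_part_def occupied_toggle occupied_shift_down split: if_splits)
  with first_part_le show "y \<le> a + charge D - 1" by (auto simp: first_part_def)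
qed

lemma first_part_add_part: "first_part (add_part a D) = a"
  by (simp add: first_part_def top_occupied_add_part charge_add_part)

lemma remove_first_part_add_part: "remove_first_part (add_part a D) = D"
  unfolding remove_first_part_def top_occupied_add_part by (simp add: add_part_def)

end

context
  fixes D :: "int set"
  assumes finite: "finite D"
begin

lemma charge_remove_first_part: "charge (remove_first_part D) = charge D"
  using finite occupied_top_occupied[OF finite]
  by (simp add: remove_first_part_def charge_shift_up charge_toggle)

lemma energy_remove_first_part: "energy (remove_first_part D) = energy D - first_part D"
  using finite occupied_top_occupied[OF finite]
  by (simp add: remove_first_part_def energy_shift_up energy_toggle charge_toggle first_part_def)

lemma first_part_remove_first_part: "first_part (remove_first_part D) \<le> first_part D"
proof -
  let ?E = "remove_first_part D"
  have "occupied ?E (top_occupied ?E)"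
    using finite by (intro occupied_top_occupied) (simp add: remove_first_part_def)
  then have "occupied (toggle (top_occupied D) D) (top_occupied ?E - 1)"
    by (simp add: remove_first_part_def occupied_shift_up)
  then have "top_occupied ?E - 1 < top_occupied D"
    using occupied_top_occupied[OF finite] le_top_occupied[OF finite]
    by (fastforce simp: occupied_toggle split: if_splits)
  then show ?thesis by (simp add: first_part_def charge_remove_first_part)
qed

lemma add_part_remove_first_part: "add_part (first_part D) (remove_first_part D) = D"
  unfolding add_part_def charge_remove_first_part by (simp add: remove_first_part_def first_part_def)

end

section \<open>The sign-reversing involution\<close>

definition move_largest_part :: "nat set \<times> int set \<Rightarrow> nat set \<times> int set" where
  "move_largest_part = (\<lambda>(A, D).
     if A \<noteq> {} \<and> first_part D \<le> int (Max A) then (A - {Max A}, add_part (int (Max A)) D)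
     else if 0 < first_part D then (insert (nat (first_part D)) A, remove_first_part D)
     else (A, D))"

lemma move_largest_part_cases:
  assumes A: "finite A" "0 \<notin> A" and D: "finite D"
  obtains (to_diagram) a where "a \<in> A" "\<forall>b\<in>A - {a}. b < a" "first_part D \<le> int a"
      "move_largest_part (A, D) = (A - {a}, add_part (int a) D)"
    | (from_diagram) "0 < first_part D" "\<forall>b\<in>A. b < nat (first_part D)"
      "move_largest_part (A, D) = (insert (nat (first_part D)) A, remove_first_part D)"
    | (fixed) "A = {}" "D = ground_state (charge D)" "move_largest_part (A, D) = (A, D)"
proof (cases "A \<noteq> {} \<and> first_part D \<le> int (Max A)")
  case True
  with A have "Max A \<in> A" "\<forall>b\<in>A - {Max A}. b < Max A" by (auto simp: order.not_eq_order_implies_strict)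
  with True show ?thesis by (intro to_diagram) (auto simp: move_largest_part_def)
next
  case not_to_diagram: False
  then have below: "\<forall>b\<in>A. int b < first_part D"
    using A(1) by (auto simp: not_le dest: Max_ge intro: le_less_trans)
  show ?thesis
  proof (cases "0 < first_part D")
    case True
    with not_to_diagram below show ?thesis
      by (intro from_diagram) (auto simp: move_largest_part_def zless_nat_eq_int_zless)
  next
    case False
    with below A(2) have "A = {}" by force
    moreover have "D = ground_state (charge D)"
      using D False by (simp add: ground_state_if_first_part_nonpos)
    ultimately show ?thesis
      using False by (intro fixed) (auto simp: move_largest_part_def)
  qed
qed

lemma move_largest_part_preserves:
  assumes "finite A" "0 \<notin> A" "finite D" and moved: "move_largest_part (A, D) = (A', D')"
  shows "finite A' \<and> 0 \<notin> A' \<and> finite D' \<and> charge D' = charge D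
    \<and> int (\<Sum>A') + energy D' = int (\<Sum>A) + energy D"
  using assms(1-3)
proof (cases rule: move_largest_part_cases)
  case (to_diagram a)
  then show ?thesis
    using assms by (auto simp: charge_add_part energy_add_part sum.remove)
next
  case from_diagram
  then have "nat (first_part D) \<notin> A" by blast
  with from_diagram show ?thesis
    using assms by (auto simp: charge_remove_first_part energy_remove_first_part)
next
  case fixed
  then show ?thesis using assms by simp
qed

lemma move_largest_part_involutive:
  assumes A: "finite A" "0 \<notin> A" and D: "finite D"
  shows "move_largest_part (move_largest_part (A, D)) = (A, D)"
  using assms
proof (cases rule: move_largest_part_cases)
  case (to_diagram a)
  let ?D' = "add_part (int a) D"
  have first: "first_part ?D' = int a" using D to_diagram(3) by (rule first_part_add_part)
  have "finite (A - {a})" "0 \<notin> A - {a}" "finite ?D'" using A D by auto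
  then have "move_largest_part (A - {a}, ?D') = (insert a (A - {a}), remove_first_part ?D')"
  proof (cases rule: move_largest_part_cases)
    case (to_diagram b)
    with \<open>\<forall>b\<in>A - {a}. b < a\<close> have "b < a" by blast
    with to_diagram(3) first show ?thesis by simp
  next
    case fixed
    with first have "a = 0" by (metis first_part_ground_state of_nat_eq_0_iff)
    with \<open>a \<in> A\<close> A(2) show ?thesis by simp
  qed (simp add: first)
  then show ?thesis
    using to_diagram D by (simp add: insert_absorb remove_first_part_add_part)
next
  case from_diagram
  let ?a = "nat (first_part D)"
  let ?D' = "remove_first_part D"
  have "finite (insert ?a A)" "0 \<notin> insert ?a A" "finite ?D'"
    using A D from_diagram(1) by auto
  then have "move_largest_part (insert ?a A, ?D') = (insert ?a A - {?a}, add_part (int ?a) ?D')"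
  proof (cases rule: move_largest_part_cases)
    case (to_diagram b)
    have "b = ?a"
    proof (rule ccontr)
      assume "b \<noteq> ?a"
      with to_diagram(1,2) from_diagram(2) have "b < ?a" "?a < b" by auto
      then show False by simp
    qed
    with to_diagram show ?thesis by simp
  next
    case from_diagram': from_diagram
    then have "first_part D < first_part ?D'" by auto
    with first_part_remove_first_part[OF D] show ?thesis by simp
  qed simp
  moreover have "?a \<notin> A" using from_diagram(2) by blast
  ultimately show ?thesis
    using from_diagram(1,3) D by (simp add: add_part_remove_first_part)
next
  case fixed
  then show ?thesis by simp
qed

lemma move_largest_part_flips_sign:
  assumes "finite A" "0 \<notin> A" "finite D"
    and moved: "move_largest_part (A, D) = (A', D')" "(A', D') \<noteq> (A, D)"
  shows "(-1::int) ^ (card A' + card D') + (-1) ^ (card A + card D) = 0"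
proof -
  have D': "finite D'" "charge D' = charge D"
    using move_largest_part_preserves[OF assms(1-4)] by auto
  have "card A' = Suc (card A) \<or> card A = Suc (card A')"
    using assms(1-3)
  proof (cases rule: move_largest_part_cases)
    case (to_diagram a)
    then show ?thesis using assms(1) moved(1) card_Suc_Diff1[OF assms(1)] by auto
  next
    case from_diagram
    then have "nat (first_part D) \<notin> A" by blast
    then show ?thesis using from_diagram(3) assms(1) moved(1) by simp
  next
    case fixed
    then show ?thesis using moved by simp
  qed
  moreover have "even (card D') \<longleftrightarrow> even (card D)"
    using D' assms(3) by (simp add: even_card_iff_even_charge)
  ultimately show ?thesis by (auto simp: minus_one_power_iff)
qed

definition weighted_pairs :: "nat \<Rightarrow> nat \<Rightarrow> (nat set \<times> int set) set" where
  "weighted_pairs m n = {(A, D). finite A \<and> 0 \<notin> A \<and> finite D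
     \<and> int m * (int (\<Sum>A) + energy D) + charge D = int n}"

lemma fixed_points_weighted_pairs:
  "{x \<in> weighted_pairs m n. move_largest_part x = x}
     = (\<lambda>c. ({}, ground_state c)) ` {c. int m * energy (ground_state c) + c = int n}" (is "?F = ?G")
proof (intro equalityI subsetI)
  fix x assume "x \<in> ?F"
  then obtain A D where x: "x = (A, D)" "(A, D) \<in> weighted_pairs m n" "move_largest_part (A, D) = (A, D)"
    by (cases x) auto
  then have "finite A" "0 \<notin> A" "finite D" by (auto simp: weighted_pairs_def)
  then have "A = {} \<and> D = ground_state (charge D)"
  proof (cases rule: move_largest_part_cases)
    case (to_diagram a)
    then show ?thesis using x(3) by auto
  next
    case from_diagram
    then show ?thesis using x(3) by auto
  qed simp
  with x show "x \<in> ?G"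
    by (auto simp: weighted_pairs_def)
next
  fix x assume "x \<in> ?G"
  then show "x \<in> ?F"
    by (auto simp: weighted_pairs_def move_largest_part_def)
qed

lemma sum_sign_weighted_pairs:
  assumes "finite (weighted_pairs m n)"
  shows "(\<Sum>(A, D)\<in>weighted_pairs m n. (-1::int) ^ (card A + card D))
    = (\<Sum>c | int m * energy (ground_state c) + c = int n. (-1) ^ nat \<bar>c\<bar>)"
proof -
  let ?W = "weighted_pairs m n"
  let ?F = "{x \<in> ?W. move_largest_part x = x}"
  let ?sign = "\<lambda>(A, D). (-1::int) ^ (card A + card D)"
  have "sum ?sign (?W - ?F) = 0"
  proof (rule sum_involution_eq_0)
    fix x assume x: "x \<in> ?W - ?F"
    obtain A D A' D' where AD: "x = (A, D)" "move_largest_part (A, D) = (A', D')"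
      by (metis surj_pair)
    with x have "finite A" "0 \<notin> A" "finite D" by (auto simp: weighted_pairs_def)
    note preserves = move_largest_part_preserves[OF this AD(2)]
    note involutive = move_largest_part_involutive[OF \<open>finite A\<close> \<open>0 \<notin> A\<close> \<open>finite D\<close>]
    show "move_largest_part x \<in> ?W - ?F"
      using x AD preserves involutive by (auto simp: weighted_pairs_def)
    show "move_largest_part (move_largest_part x) = x" using AD involutive by simp
    show "move_largest_part x \<noteq> x" using x by simp
    show "?sign (move_largest_part x) + ?sign x = 0"
      using move_largest_part_flips_sign[OF \<open>finite A\<close> \<open>0 \<notin> A\<close> \<open>finite D\<close> AD(2)] x AD by simp
  qed
  then have "sum ?sign ?W = sum ?sign ?F"
    using assms by (simp add: sum.subset_diff[of ?F ?W])
  also have "\<dots> = (\<Sum>c | int m * energy (ground_state c) + c = int n. (-1) ^ nat \<bar>c\<bar>)"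
    unfolding fixed_points_weighted_pairs
    by (subst sum.reindex) (auto intro: inj_onI dest: arg_cong[where f = "charge \<circ> snd"])
  finally show ?thesis .
qed

section \<open>Encoding the partitions\<close>

definition part_of :: "nat \<Rightarrow> int \<Rightarrow> nat" where
  "part_of m t = nat \<bar>int m * t + 1\<bar>"

definition encode :: "nat \<Rightarrow> nat set \<times> int set \<Rightarrow> nat set" where
  "encode m = (\<lambda>(A, D). (*) m ` A \<union> part_of m ` D)"

lemma int_part_of:
  assumes "0 < m"
  shows "int (part_of m t) = int m * \<bar>t\<bar> + (if 0 \<le> t then 1 else -1)"
proof (cases "0 \<le> t")
  case False
  then have "int m * 1 \<le> int m * (- t)" by (intro mult_left_mono) auto
  with assms False show ?thesis by (simp add: part_of_def)
qed (simp add: part_of_def)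

lemma part_of_mod:
  assumes "3 \<le> m"
  shows "part_of m t mod m = (if 0 \<le> t then 1 else m - 1)"
proof (cases "0 \<le> t")
  case True
  with assms have "int (part_of m t) = int (1 + m * nat t)" by (simp add: int_part_of)
  then have "part_of m t mod m = 1 mod m" by (simp only: of_nat_eq_iff mod_mult_self2)
  with assms True show ?thesis by simp
next
  case False
  with assms have "int (part_of m t) = int ((m - 1) + m * nat (- t - 1))"
    by (simp add: int_part_of algebra_simps of_nat_diff)
  then have "part_of m t mod m = (m - 1) mod m" by (simp only: of_nat_eq_iff mod_mult_self2)
  with assms False show ?thesis by simp
qed

lemma inj_part_of:
  assumes "3 \<le> m"
  shows "inj (part_of m)"
proof (rule injI)
  fix s t assume eq: "part_of m s = part_of m t"
  then have "(if 0 \<le> s then 1 else m - 1) = (if 0 \<le> t then (1::nat) else m - 1)"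
    by (simp only: part_of_mod[OF assms, symmetric])
  with assms have sign: "0 \<le> s \<longleftrightarrow> 0 \<le> t" by (simp split: if_splits)
  have "int (part_of m s) = int (part_of m t)" using eq by simp
  with assms sign have "int m * \<bar>s\<bar> = int m * \<bar>t\<bar>" by (simp add: int_part_of)
  with assms have "\<bar>s\<bar> = \<bar>t\<bar>" by simp
  with sign show "s = t" by (cases "0 \<le> s") (simp_all add: abs_if split: if_splits)
qed

lemma range_part_of:
  assumes "3 \<le> m"
  shows "range (part_of m) = {x. x mod m = 1 \<or> x mod m = m - 1}"
proof (intro equalityI subsetI)
  fix x assume "x \<in> {x. x mod m = 1 \<or> x mod m = m - 1}"
  then consider "x mod m = 1" | "x mod m = m - 1" by blast
  moreover have x: "int x = int m * int (x div m) + int (x mod m)"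
    by (metis div_mult_mod_eq mult.commute of_nat_add of_nat_mult)
  ultimately obtain t where "int (part_of m t) = int x"
  proof cases
    case 1
    with assms x show ?thesis by (intro that[of "int (x div m)"]) (simp add: int_part_of)
  next
    case 2
    with assms x show ?thesis
      by (intro that[of "- int (x div m) - 1"]) (simp add: int_part_of algebra_simps of_nat_diff)
  qed
  then show "x \<in> range (part_of m)" by (metis of_nat_eq_iff rangeI)
qed (auto simp: part_of_mod[OF assms])

lemma range_times_Int_range_part_of:
  "3 \<le> m \<Longrightarrow> range ((*) m) \<inter> range (part_of m) = {}"
  by (auto simp: range_part_of)

context
  fixes m :: nat
  assumes m: "3 \<le> m"
begin

lemma part_of_neq_0: "part_of m t \<noteq> 0"
proof
  assume "part_of m t = 0"
  with part_of_mod[OF m, of t] m show False by (simp split: if_splits)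
qed

lemma vimage_encode:
  "(*) m -` encode m (A, D) = A" "part_of m -` encode m (A, D) = D"
proof -
  have "inj ((*) m)" using m by (auto intro: injI)
  moreover have "(*) m -` part_of m ` D = {}" "part_of m -` (*) m ` A = {}"
    using range_times_Int_range_part_of[OF m] by auto
  ultimately show "(*) m -` encode m (A, D) = A" "part_of m -` encode m (A, D) = D"
    using inj_part_of[OF m] by (simp_all add: encode_def inj_vimage_image_eq)
qed

lemma encode_vimage:
  "S \<subseteq> range ((*) m) \<union> range (part_of m) \<Longrightarrow> encode m ((*) m -` S, part_of m -` S) = S"
  by (auto simp: encode_def)

lemma sum_encode:
  assumes "finite A" "finite D"
  shows "int (\<Sum>(encode m (A, D))) = int m * (int (\<Sum>A) + energy D) + charge D"
proof -
  have "\<Sum>(encode m (A, D)) = \<Sum>((*) m ` A) + \<Sum>(part_of m ` D)"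
    using assms range_times_Int_range_part_of[OF m] by (auto simp: encode_def intro: sum.union_disjoint)
  also have "\<dots> = (\<Sum>a\<in>A. m * a) + (\<Sum>t\<in>D. part_of m t)"
    using m inj_part_of[OF m] by (simp add: sum.reindex inj_on_def)
  finally show ?thesis
    using m by (simp add: int_part_of energy_def charge_def sum.distrib sum_distrib_left distrib_left)
qed

lemma card_encode:
  assumes "finite A" "finite D"
  shows "card (encode m (A, D)) = card A + card D"
proof -
  have "card (encode m (A, D)) = card ((*) m ` A) + card (part_of m ` D)"
    using assms range_times_Int_range_part_of[OF m] by (auto simp: encode_def intro: card_Un_disjoint)
  also have "\<dots> = card A + card D"
    using m inj_part_of[OF m] by (simp add: card_image inj_on_def)
  finally show ?thesis .
qed

lemma dist_parts_mod_eq: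
  "dist_parts_mod m n
     = {S. finite S \<and> 0 \<notin> S \<and> \<Sum>S = n \<and> S \<subseteq> range ((*) m) \<union> range (part_of m)}"
  using m by (auto simp: dist_parts_mod_def range_part_of)

lemma bij_betw_encode: "bij_betw (encode m) (weighted_pairs m n) (dist_parts_mod m n)"
proof (rule bij_betw_byWitness[where f' = "\<lambda>S. ((*) m -` S, part_of m -` S)"])
  show "\<forall>x\<in>weighted_pairs m n. ((*) m -` encode m x, part_of m -` encode m x) = x"
    by (clarify, simp only: vimage_encode)
  show "\<forall>S\<in>dist_parts_mod m n. encode m ((*) m -` S, part_of m -` S) = S"
    by (auto simp: dist_parts_mod_eq encode_vimage)
  show "encode m ` weighted_pairs m n \<subseteq> dist_parts_mod m n"
  proof clarify
    fix A D assume "(A, D) \<in> weighted_pairs m n"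
    then have A: "finite A" "0 \<notin> A" and D: "finite D"
      and weight: "int m * (int (\<Sum>A) + energy D) + charge D = int n"
      by (auto simp: weighted_pairs_def)
    have "int (\<Sum>(encode m (A, D))) = int n" using sum_encode[OF A(1) D] weight by simp
    moreover have "0 \<notin> part_of m ` D" by (metis imageE part_of_neq_0)
    ultimately show "encode m (A, D) \<in> dist_parts_mod m n"
      using m A D by (auto simp: dist_parts_mod_eq encode_def simp del: of_nat_sum)
  qed
  show "(\<lambda>S. ((*) m -` S, part_of m -` S)) ` dist_parts_mod m n \<subseteq> weighted_pairs m n"
  proof clarify
    fix S assume S: "S \<in> dist_parts_mod m n"
    then have "finite ((*) m -` S)" "finite (part_of m -` S)"
      using m inj_part_of[OF m] by (auto simp: dist_parts_mod_def intro!: finite_vimageI injI)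
    moreover have "0 \<notin> (*) m -` S" using S by (simp add: dist_parts_mod_def)
    moreover have "int (\<Sum>S) = int n" using S by (simp add: dist_parts_mod_def)
    ultimately show "((*) m -` S, part_of m -` S) \<in> weighted_pairs m n"
      using sum_encode[of "(*) m -` S" "part_of m -` S"] S
      by (simp add: weighted_pairs_def dist_parts_mod_eq encode_vimage)
  qed
qed

end

lemma finite_dist_parts_mod: "finite (dist_parts_mod m n)"
proof (rule finite_subset)
  show "dist_parts_mod m n \<subseteq> Pow {..n}"
    by (auto simp: dist_parts_mod_def intro: member_le_sum)
qed simp

lemma card_even_minus_card_odd:
  assumes "finite P"
  shows "int (card {x\<in>P. even (f x)}) - int (card {x\<in>P. odd (f x)}) = (\<Sum>x\<in>P. (-1) ^ f x)"
proof -
  have "(\<Sum>x\<in>P. (-1::int) ^ f x) = (\<Sum>x\<in>P. if even (f x) then 1 else -1)"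
    by (rule sum.cong) auto
  also have "\<dots> = int (card {x\<in>P. even (f x)}) - int (card {x\<in>P. odd (f x)})"
    using assms by (simp add: sum.If_cases Int_def)
  finally show ?thesis ..
qed

lemma signed_count_dist_parts_mod:
  assumes m: "3 \<le> m"
  shows "int (p_e m n) - int (p_o m n) = (\<Sum>c | int m * energy (ground_state c) + c = int n. (-1) ^ nat \<bar>c\<bar>)"
proof -
  have bij: "bij_betw (encode m) (weighted_pairs m n) (dist_parts_mod m n)"
    by (rule bij_betw_encode[OF m])
  then have finite: "finite (weighted_pairs m n)"
    using bij_betw_finite finite_dist_parts_mod by blast
  have "int (p_e m n) - int (p_o m n) = (\<Sum>S\<in>dist_parts_mod m n. (-1) ^ card S)"
    unfolding p_e_def p_o_def by (rule card_even_minus_card_odd[OF finite_dist_parts_mod])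
  also have "\<dots> = (\<Sum>x\<in>weighted_pairs m n. (-1) ^ card (encode m x))"
    by (rule sum.reindex_bij_betw[OF bij, symmetric])
  also have "\<dots> = (\<Sum>(A, D)\<in>weighted_pairs m n. (-1) ^ (card A + card D))"
    by (rule sum.cong) (auto simp: weighted_pairs_def card_encode[OF m])
  also have "\<dots> = (\<Sum>c | int m * energy (ground_state c) + c = int n. (-1) ^ nat \<bar>c\<bar>)"
    by (rule sum_sign_weighted_pairs[OF finite])
  finally show ?thesis .
qed

lemma P_gen_eq_ground_state: "P_gen m k = int m * energy (ground_state (int k)) + int k"
proof -
  have "2 * (int m * energy (ground_state (int k)) + int k)
      = int m * (2 * energy (ground_state (int k))) + 2 * int k" by (simp add: algebra_simps)
  also have "\<dots> = int k * (int m * int k - (int m - 2))"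
    unfolding energy_ground_state by (simp add: algebra_simps)
  finally show ?thesis by (simp add: P_gen_def)
qed

lemma Q_gen_eq_ground_state: "Q_gen m k = int m * energy (ground_state (- int k)) - int k"
proof -
  have "2 * (int m * energy (ground_state (- int k)) - int k)
      = int m * (2 * energy (ground_state (- int k))) - 2 * int k" by (simp add: algebra_simps)
  also have "\<dots> = int k * (int m * int k + (int m - 2))"
    unfolding energy_ground_state by (simp add: algebra_simps)
  finally show ?thesis by (simp add: Q_gen_def)
qed

lemma ground_state_weight_inj:
  assumes m: "3 \<le> m" and eq: "int m * energy (ground_state c) + c = int m * energy (ground_state d) + d"
  shows "c = d"
proof -
  have "int m * (2 * energy (ground_state c)) + 2 * c = int m * (2 * energy (ground_state d)) + 2 * d"
    using eq by (simp add: algebra_simps)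
  then have "int m * (c * (c - 1)) + 2 * c = int m * (d * (d - 1)) + 2 * d"
    by (simp only: energy_ground_state)
  moreover have "(c - d) * (int m * (c + d - 1) + 2)
      = (int m * (c * (c - 1)) + 2 * c) - (int m * (d * (d - 1)) + 2 * d)"
    by (simp add: algebra_simps)
  ultimately have "(c - d) * (int m * (c + d - 1) + 2) = 0" by simp
  moreover have "int m * (c + d - 1) + 2 \<noteq> 0"
  proof (cases "0 \<le> c + d - 1")
    case True
    then have "0 \<le> int m * (c + d - 1)" by simp
    then show ?thesis by linarith
  next
    case False
    then have "int m * (c + d - 1) \<le> int m * (-1)" by (intro mult_left_mono) auto
    with m show ?thesis by simp
  qed
  ultimately show ?thesis by simp
qed

theorem theorem2p7:
  fixes m n :: nat
  assumes "m \<ge> 3"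
  shows "(\<forall>k::nat. (int n = P_gen m k \<or> int n = Q_gen m k) \<longrightarrow>
            int (p_e m n) - int (p_o m n) = (-1) ^ k)
       \<and> ((\<nexists>k::nat. int n = P_gen m k \<or> int n = Q_gen m k) \<longrightarrow>
            int (p_e m n) - int (p_o m n) = 0)"
proof -
  define C where "C = {c. int m * energy (ground_state c) + c = int n}"
  have count: "int (p_e m n) - int (p_o m n) = (\<Sum>c\<in>C. (-1) ^ nat \<bar>c\<bar>)"
    unfolding C_def by (rule signed_count_dist_parts_mod[OF assms])
  have singleton: "C = {c}" if "c \<in> C" for c
  proof -
    have "d = c" if "d \<in> C" for d
    proof (rule ground_state_weight_inj[OF assms])
      show "int m * energy (ground_state d) + d = int m * energy (ground_state c) + c"
        using that \<open>c \<in> C\<close> by (simp add: C_def)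
    qed
    with \<open>c \<in> C\<close> show ?thesis by blast
  qed
  have P_or_Q_iff: "int n = P_gen m k \<or> int n = Q_gen m k \<longleftrightarrow> int k \<in> C \<or> - int k \<in> C" for k
    by (auto simp: C_def P_gen_eq_ground_state Q_gen_eq_ground_state)
  show ?thesis
  proof (intro conjI allI impI)
    fix k assume "int n = P_gen m k \<or> int n = Q_gen m k"
    then have "C = {int k} \<or> C = {- int k}" using P_or_Q_iff singleton by blast
    with count show "int (p_e m n) - int (p_o m n) = (-1) ^ k" by auto
  next
    assume none: "\<nexists>k. int n = P_gen m k \<or> int n = Q_gen m k"
    have "C = {}"
    proof (rule equals0I)
      fix c assume "c \<in> C"
      then have "int (nat \<bar>c\<bar>) \<in> C \<or> - int (nat \<bar>c\<bar>) \<in> C" by (cases "0 \<le> c") simp_all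
      with none P_or_Q_iff show False by blast
    qed
    with count show "int (p_e m n) - int (p_o m n) = 0" by simp
  qed
qed

end
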